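(* A graph $G$ is non-ambiguous if and only if it is covering-minimal.
   Context: Graphs are finite, simple, undirected, connected; $B_G(v)$ denotes the ball of radius $1$ around $v$ (vertices $N_G(v)\cup\{v\}$ and the edges from $v$). A labelling $\lambda$ of the vertices of $G$ is locally bijective if (1) for each $v$ and all $v',v''\in B_G(v)$, $\lambda(v')=\lambda(v'')$ iff $v'=v''$, and (2) for all $v',v''$ with $\lambda(v')=\lambda(v'')$, the labelled balls $(B_G(v'),\lambda)$ and $(B_G(v''),\lambda)$ are isomorphic. $G$ is ambiguous if it has a locally bijective labelling that is not bijective, and non-ambiguous otherwise. $G$ is a covering of $H$ via $\gamma$ if $\gamma$ is a surjective homomorphism whose restriction to each $B_G(v)$ is a bijection onto $B_H(\gamma(v))$; $G$ is covering-minimal if every covering from $G$ to some graph $H$ is a bijection. *)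

theory Defs
  imports Main
begin

definition graph :: "'a set \<Rightarrow> ('a \<Rightarrow> 'a \<Rightarrow> bool) \<Rightarrow> bool" where
  "graph V E \<longleftrightarrow> finite V \<and> V \<noteq> {} \<and>
     (\<forall>x y. E x y \<longrightarrow> x \<in> V \<and> y \<in> V) \<and>
     (\<forall>x y. E x y \<longrightarrow> E y x) \<and> (\<forall>x. \<not> E x x) \<and>
     (\<forall>x\<in>V. \<forall>y\<in>V. E\<^sup>*\<^sup>* x y)"

definition ball_verts :: "('a \<Rightarrow> 'a \<Rightarrow> bool) \<Rightarrow> 'a \<Rightarrow> 'a set" where
  "ball_verts E v = insert v {u. E v u}"

definition ball_edge :: "('a \<Rightarrow> 'a \<Rightarrow> bool) \<Rightarrow> 'a \<Rightarrow> 'a \<Rightarrow> 'a \<Rightarrow> bool" where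
  "ball_edge E v x y \<longleftrightarrow> (x = v \<and> E v y) \<or> (y = v \<and> E v x)"

definition labelled_balls_iso ::
  "('a \<Rightarrow> 'a \<Rightarrow> bool) \<Rightarrow> ('a \<Rightarrow> 'l) \<Rightarrow> 'a \<Rightarrow> 'a \<Rightarrow> bool" where
  "labelled_balls_iso E lam v1 v2 \<longleftrightarrow>
     (\<exists>f. bij_betw f (ball_verts E v1) (ball_verts E v2) \<and>
          (\<forall>x\<in>ball_verts E v1. lam (f x) = lam x) \<and>
          (\<forall>x\<in>ball_verts E v1. \<forall>y\<in>ball_verts E v1.
              ball_edge E v1 x y \<longleftrightarrow> ball_edge E v2 (f x) (f y)))"

definition locally_bijective ::
  "'a set \<Rightarrow> ('a \<Rightarrow> 'a \<Rightarrow> bool) \<Rightarrow> ('a \<Rightarrow> 'l) \<Rightarrow> bool" where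
  "locally_bijective V E lam \<longleftrightarrow>
     (\<forall>v\<in>V. inj_on lam (ball_verts E v)) \<and>
     (\<forall>v1\<in>V. \<forall>v2\<in>V. lam v1 = lam v2 \<longrightarrow> labelled_balls_iso E lam v1 v2)"

text \<open>Labels are taken in nat; since V is finite this loses no generality.\<close>
definition ambiguous :: "'a set \<Rightarrow> ('a \<Rightarrow> 'a \<Rightarrow> bool) \<Rightarrow> bool" where
  "ambiguous V E \<longleftrightarrow>
     (\<exists>lam :: 'a \<Rightarrow> nat. locally_bijective V E lam \<and> \<not> inj_on lam V)"

definition covering ::
  "'a set \<Rightarrow> ('a \<Rightarrow> 'a \<Rightarrow> bool) \<Rightarrow> 'b set \<Rightarrow> ('b \<Rightarrow> 'b \<Rightarrow> bool) \<Rightarrow> ('a \<Rightarrow> 'b) \<Rightarrow> bool" where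
  "covering V E W F \<gamma> \<longleftrightarrow>
     \<gamma> ` V = W \<and>
     (\<forall>x y. E x y \<longrightarrow> F (\<gamma> x) (\<gamma> y)) \<and>
     (\<forall>v\<in>V. bij_betw \<gamma> (ball_verts E v) (ball_verts F (\<gamma> v)))"

text \<open>Target graphs H are taken with vertices in nat; every finite graph is
  isomorphic to one of these.\<close>
definition covering_minimal :: "'a set \<Rightarrow> ('a \<Rightarrow> 'a \<Rightarrow> bool) \<Rightarrow> bool" where
  "covering_minimal V E \<longleftrightarrow>
     (\<forall>(W :: nat set) F \<gamma>. graph W F \<and> covering V E W F \<gamma> \<longrightarrow> bij_betw \<gamma> V W)"

end

theory Submission
  imports Defs
begin

text \<open>A covering is itself a locally bijective labelling: two vertices with the same image have
  balls mapped bijectively onto the same ball, and composing one bijection with the inverse of the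
  other is a label-preserving isomorphism of balls.  Conversely, a locally bijective labelling
  \<open>\<lambda>\<close> is a covering of the quotient graph on the labels, in which two labels are adjacent iff
  some edge carries them.  So a non-injective covering and a non-injective locally bijective
  labelling are the same thing, which is the theorem.\<close>

lemma rtranclp_homomorphic:
  assumes "\<And>x y. r x y \<Longrightarrow> s (f x) (f y)" and "r\<^sup>*\<^sup>* x y"
  shows "s\<^sup>*\<^sup>* (f x) (f y)"
  using assms(2)
proof (induction rule: rtranclp_induct)
  case base
  show ?case by simp
next
  case (step y z)
  then show ?case using assms(1) by (meson rtranclp.rtrancl_into_rtrancl)
qed

lemma centre_in_ball_verts: "v \<in> ball_verts E v"
  unfolding ball_verts_def by simp

lemma ball_edge_iff_centre:
  assumes "\<forall>x. \<not> E x x" and "x \<in> ball_verts E v" and "y \<in> ball_verts E v"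
  shows "ball_edge E v x y \<longleftrightarrow> (x = v) \<noteq> (y = v)"
  using assms unfolding ball_edge_def ball_verts_def by auto

text \<open>In a ball only the edges at the centre are kept, so any bijection of balls fixing the
  centres is automatically an isomorphism.\<close>
lemma labelled_balls_isoI:
  assumes irr: "\<forall>x. \<not> E x x"
    and bij: "bij_betw f (ball_verts E v1) (ball_verts E v2)"
    and centre: "f v1 = v2"
    and labels: "\<forall>x\<in>ball_verts E v1. lam (f x) = lam x"
  shows "labelled_balls_iso E lam v1 v2"
  unfolding labelled_balls_iso_def
proof (intro exI conjI ballI)
  fix x y assume x: "x \<in> ball_verts E v1" and y: "y \<in> ball_verts E v1"
  have fx: "f x \<in> ball_verts E v2" and fy: "f y \<in> ball_verts E v2"
    using bij x y bij_betwE by blast+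
  have "f z = v2 \<longleftrightarrow> z = v1" if "z \<in> ball_verts E v1" for z
    using bij that centre centre_in_ball_verts by (metis bij_betw_def inj_on_def)
  then show "ball_edge E v1 x y \<longleftrightarrow> ball_edge E v2 (f x) (f y)"
    using ball_edge_iff_centre[OF irr x y] ball_edge_iff_centre[OF irr fx fy] x y by blast
qed (use bij labels in auto)

lemma covering_imp_locally_bijective:
  assumes cov: "covering V E W F \<gamma>" and irr: "\<forall>x. \<not> E x x"
  shows "locally_bijective V E \<gamma>"
proof -
  have ball_bij: "bij_betw \<gamma> (ball_verts E v) (ball_verts F (\<gamma> v))" if "v \<in> V" for v
    using cov that unfolding covering_def by blast
  have "labelled_balls_iso E \<gamma> v1 v2" if v1: "v1 \<in> V" and v2: "v2 \<in> V" and same: "\<gamma> v1 = \<gamma> v2"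
    for v1 v2
  proof -
    define f where "f = inv_into (ball_verts E v2) \<gamma> \<circ> \<gamma>"
    have bij2: "bij_betw \<gamma> (ball_verts E v2) (ball_verts F (\<gamma> v1))"
      using ball_bij[OF v2] same by simp
    have f_bij: "bij_betw f (ball_verts E v1) (ball_verts E v2)"
      unfolding f_def using ball_bij[OF v1] bij_betw_inv_into[OF bij2] by (rule bij_betw_trans)
    have f_labels: "\<forall>x\<in>ball_verts E v1. \<gamma> (f x) = \<gamma> x"
      unfolding f_def using ball_bij[OF v1] bij2
      by (metis bij_betwE bij_betw_imp_surj_on comp_apply f_inv_into_f)
    have "f v1 = v2"
      using f_bij f_labels ball_bij[OF v2] same centre_in_ball_verts
      by (metis bij_betwE bij_betw_def inj_on_def)
    then show ?thesis
      using labelled_balls_isoI[OF irr f_bij _ f_labels] by blast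
  qed
  then show ?thesis
    unfolding locally_bijective_def using ball_bij bij_betw_def by blast
qed

lemma locally_bijective_adjacent_labels_differ:
  assumes "\<forall>x. \<not> E x x" and "locally_bijective V E lam" and "x \<in> V" and "E x y"
  shows "lam x \<noteq> lam y"
proof
  assume "lam x = lam y"
  moreover have "inj_on lam (ball_verts E x)"
    using assms(2,3) unfolding locally_bijective_def by blast
  moreover have "y \<in> ball_verts E x"
    using assms(4) unfolding ball_verts_def by simp
  ultimately have "x = y"
    using centre_in_ball_verts by (metis inj_onD)
  then show False using assms(1,4) by blast
qed

definition label_quotient :: "('a \<Rightarrow> 'a \<Rightarrow> bool) \<Rightarrow> ('a \<Rightarrow> 'l) \<Rightarrow> 'l \<Rightarrow> 'l \<Rightarrow> bool" where
  "label_quotient E lam a b \<longleftrightarrow> (\<exists>x y. E x y \<and> lam x = a \<and> lam y = b)"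

lemma graph_label_quotient:
  assumes g: "graph V E" and lb: "locally_bijective V E lam"
  shows "graph (lam ` V) (label_quotient E lam)"
proof -
  have fin: "finite V" and ne: "V \<noteq> {}" and in_V: "\<forall>x y. E x y \<longrightarrow> x \<in> V \<and> y \<in> V"
    and sym: "\<forall>x y. E x y \<longrightarrow> E y x" and irr: "\<forall>x. \<not> E x x"
    and conn: "\<forall>x\<in>V. \<forall>y\<in>V. E\<^sup>*\<^sup>* x y"
    using g unfolding graph_def by blast+
  have hom: "E x y \<Longrightarrow> label_quotient E lam (lam x) (lam y)" for x y
    unfolding label_quotient_def by blast
  show ?thesis
    unfolding graph_def
  proof (intro conjI allI impI ballI)
    show "finite (lam ` V)" "lam ` V \<noteq> {}"
      using fin ne by simp_all
  next
    fix a b assume "label_quotient E lam a b"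
    then show "a \<in> lam ` V" "b \<in> lam ` V" "label_quotient E lam b a"
      using in_V sym unfolding label_quotient_def by blast+
  next
    fix a show "\<not> label_quotient E lam a a"
    proof
      assume "label_quotient E lam a a"
      then obtain x y where xy: "E x y" and "lam x = a" "lam y = a"
        unfolding label_quotient_def by blast
      moreover have "x \<in> V" using in_V xy by blast
      ultimately show False
        using locally_bijective_adjacent_labels_differ[OF irr lb _ xy] by simp
    qed
  next
    fix a b assume "a \<in> lam ` V" "b \<in> lam ` V"
    then show "(label_quotient E lam)\<^sup>*\<^sup>* a b"
      using conn rtranclp_homomorphic[of E "label_quotient E lam" lam, OF hom] by blast
  qed
qed

text \<open>Surjectivity on balls is where the isomorphism of labelled balls is needed: a label adjacent
  to \<open>\<lambda> v\<close> is carried by an edge at some \<open>x\<close> with \<open>\<lambda> x = \<lambda> v\<close>, and the ball isomorphism moves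
  it to a neighbour of \<open>v\<close>.\<close>
lemma covering_label_quotient:
  assumes g: "graph V E" and lb: "locally_bijective V E lam"
  shows "covering V E (lam ` V) (label_quotient E lam) lam"
  unfolding covering_def
proof (intro conjI allI impI ballI)
  fix v assume v: "v \<in> V"
  have "ball_verts (label_quotient E lam) (lam v) \<subseteq> lam ` ball_verts E v"
  proof
    fix b assume "b \<in> ball_verts (label_quotient E lam) (lam v)"
    then consider "b = lam v" | x y where "E x y" "lam x = lam v" "lam y = b"
      unfolding ball_verts_def label_quotient_def by blast
    then show "b \<in> lam ` ball_verts E v"
    proof cases
      case 1
      then show ?thesis by (simp add: centre_in_ball_verts)
    next
      case (2 x y)
      then have "x \<in> V" using g unfolding graph_def by simp
      then have "labelled_balls_iso E lam x v"
        using lb v 2(2) unfolding locally_bijective_def by simp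
      then obtain f where f_bij: "bij_betw f (ball_verts E x) (ball_verts E v)"
        and f_labels: "\<forall>z\<in>ball_verts E x. lam (f z) = lam z"
        unfolding labelled_balls_iso_def by blast
      have y: "y \<in> ball_verts E x" using 2(1) unfolding ball_verts_def by simp
      then have "f y \<in> ball_verts E v" using bij_betwE[OF f_bij] by blast
      moreover have "lam (f y) = b" using f_labels y 2(3) by simp
      ultimately show ?thesis by (metis image_eqI)
    qed
  qed
  moreover have "lam ` ball_verts E v \<subseteq> ball_verts (label_quotient E lam) (lam v)"
    unfolding ball_verts_def label_quotient_def by auto
  moreover have "inj_on lam (ball_verts E v)"
    using lb v unfolding locally_bijective_def by blast
  ultimately show "bij_betw lam (ball_verts E v) (ball_verts (label_quotient E lam) (lam v))"
    unfolding bij_betw_def by blast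
qed (auto simp: label_quotient_def)

theorem mainTheorem12:
  fixes V :: "'a set" and E :: "'a \<Rightarrow> 'a \<Rightarrow> bool"
  assumes "graph V E"
  shows "\<not> ambiguous V E \<longleftrightarrow> covering_minimal V E"
proof
  assume unambiguous: "\<not> ambiguous V E"
  have irr: "\<forall>x. \<not> E x x" using assms unfolding graph_def by blast
  show "covering_minimal V E"
    unfolding covering_minimal_def
  proof (intro allI impI)
    fix W :: "nat set" and F \<gamma> assume "graph W F \<and> covering V E W F \<gamma>"
    then have cov: "covering V E W F \<gamma>" by simp
    have "inj_on \<gamma> V"
      using unambiguous covering_imp_locally_bijective[OF cov irr] unfolding ambiguous_def by blast
    with cov show "bij_betw \<gamma> V W"
      unfolding covering_def bij_betw_def by blast
  qed
next
  assume minimal: "covering_minimal V E"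
  show "\<not> ambiguous V E"
  proof
    assume "ambiguous V E"
    then obtain lam :: "'a \<Rightarrow> nat" where lb: "locally_bijective V E lam" and "\<not> inj_on lam V"
      unfolding ambiguous_def by blast
    moreover have "bij_betw lam V (lam ` V)"
      using minimal graph_label_quotient[OF assms lb] covering_label_quotient[OF assms lb]
      unfolding covering_minimal_def by blast
    ultimately show False by (simp add: bij_betw_def)
  qed
qed

end
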